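(* Let $n\in\mathbb N$ and let $f$ be extremal for $M_n$ with $N$ atoms. If there exists a holomorphic $\psi:\mathbb D\to\mathbb D$ with $\psi\ne\mathrm{id}$, $\psi(0)=0$ and $f\circ\psi=f$, then $\psi$ is a rotation $z\mapsto\xi z$ ($\xi\in\partial\mathbb D$) and $\gcd(N,n)>1$.
   Context: $\mathbb D$ is the open unit disc; $\mathcal B_0=\{f$ holomorphic on $\mathbb D: 0<|f|\le1\}$; $M_n(f)=\mathrm{Re}\,a_n$ for $f=\sum a_jz^j$; $f\in\mathcal B_0$ is extremal for $M_n$ if $M_n(f)\ge M_n(F)$ for all $F\in\mathcal B_0$. It is known that every extremal $f$ can be written as $f(z)=\gamma\exp\big(-\sum_{j=1}^N\lambda_j\frac{1+\alpha_jz}{1-\alpha_jz}\big)$ with $\gamma\in\partial\mathbb D$, $1\le N\le n$, $\lambda_j>0$, distinct $\alpha_j\in\partial\mathbb D$; $N$ is the number of atoms. *)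

theory Defs
  imports "HOL-Complex_Analysis.Complex_Analysis"
begin

definition B0 :: "(complex \<Rightarrow> complex) set" where
  "B0 = {f. f holomorphic_on ball 0 1 \<and>
            (\<forall>z\<in>ball 0 1. 0 < norm (f z) \<and> norm (f z) \<le> 1)}"

definition taylor_coeff :: "(complex \<Rightarrow> complex) \<Rightarrow> nat \<Rightarrow> complex" where
  "taylor_coeff f n = (deriv ^^ n) f 0 / of_nat (fact n)"

definition M :: "nat \<Rightarrow> (complex \<Rightarrow> complex) \<Rightarrow> real" where
  "M n f = Re (taylor_coeff f n)"

definition extremal :: "nat \<Rightarrow> (complex \<Rightarrow> complex) \<Rightarrow> bool" where
  "extremal n f \<longleftrightarrow> f \<in> B0 \<and> (\<forall>F\<in>B0. M n F \<le> M n f)"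

definition has_atoms :: "(complex \<Rightarrow> complex) \<Rightarrow> nat \<Rightarrow> bool" where
  "has_atoms f N \<longleftrightarrow> 1 \<le> N \<and>
     (\<exists>\<gamma> (lam :: nat \<Rightarrow> real) (\<alpha> :: nat \<Rightarrow> complex).
        norm \<gamma> = 1 \<and> (\<forall>j<N. lam j > 0 \<and> norm (\<alpha> j) = 1) \<and> inj_on \<alpha> {..<N} \<and>
        (\<forall>z\<in>ball 0 1. f z = \<gamma> * exp (- (\<Sum>j<N. of_real (lam j) *
              ((1 + \<alpha> j * z) / (1 - \<alpha> j * z))))))"

end

theory Submission
  imports Defs "HOL-Real_Asymp.Real_Asymp"
begin

text \<open>An f with atoms has |f(0)| < 1, so it is not extremal for M_0; for n > 0, testing
extremality against (1 + z^n)/2 shows that the n-th Taylor coefficient of f is nonzero, so f is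
not constant. Factoring f - f(0) = z^m h near 0 on both sides of f \<circ> \<psi> = f gives
\<psi>'(0)^m = 1, and Schwarz's lemma makes \<psi> a rotation z \<mapsto> \<xi> z. Comparing n-th Taylor
coefficients in f(\<xi> z) = f(z) gives \<xi>^n = 1. Since |f| tends to 0 exactly along the radii
ending at the points cnj(\<alpha>_j), rotation invariance forces multiplication by cnj \<xi> to permute
the N atoms, whence \<xi>^N = 1. As \<xi> \<noteq> 1, gcd N n > 1.\<close>

lemma power_gcd_eq_1:
  fixes x :: "'a::monoid_mult"
  assumes "x ^ a = 1" "x ^ b = 1"
  shows "x ^ gcd a b = 1"
proof (cases "a = 0")
  case True
  then show ?thesis using assms by simp
next
  case False
  then obtain u v where "a * u = b * v + gcd a b"
    using bezout_nat by blast
  then have "x ^ (a * u) = x ^ (b * v) * x ^ gcd a b"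
    by (simp add: power_add)
  then show ?thesis
    using assms by (simp add: power_mult)
qed

lemma power_card_eq_1_if_scaling_invariant:
  fixes \<zeta> :: "'a::field"
  assumes "finite A" "0 \<notin> A" "\<zeta> \<noteq> 0" "(\<lambda>a. \<zeta> * a) ` A \<subseteq> A"
  shows "\<zeta> ^ card A = 1"
proof -
  have inj: "inj_on (\<lambda>a. \<zeta> * a) A"
    using assms(3) by (auto simp: inj_on_def)
  have "\<Prod>A = \<Prod>((\<lambda>a. \<zeta> * a) ` A)"
    using endo_inj_surj[OF assms(1,4) inj] by simp
  also have "\<dots> = (\<Prod>a\<in>A. \<zeta> * a)"
    by (simp add: prod.reindex[OF inj])
  also have "\<dots> = \<zeta> ^ card A * \<Prod>A"
    by (simp add: prod.distrib)
  finally show ?thesis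
    using assms(1,2) by simp
qed

lemma higher_deriv_0_rotation_invariant:
  fixes f :: "complex \<Rightarrow> complex"
  assumes holf: "f holomorphic_on ball 0 r" and "0 < r" and "norm \<xi> = 1"
    and inv: "\<And>z. z \<in> ball 0 r \<Longrightarrow> f (\<xi> * z) = f z"
  shows "\<xi> ^ n * (deriv ^^ n) f 0 = (deriv ^^ n) f 0"
proof -
  have rot: "\<xi> * z \<in> ball 0 r" if "z \<in> ball 0 r" for z
    using that \<open>norm \<xi> = 1\<close> by (simp add: norm_mult)
  have "(\<lambda>z. \<xi> * z) ` ball 0 r \<subseteq> ball 0 r"
    using rot by blast
  then have "(\<lambda>z. f (\<xi> * z)) holomorphic_on ball 0 r"
    using holomorphic_on_compose_gen[OF _ holf] by (auto simp: o_def intro: holomorphic_intros)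
  then have "(deriv ^^ n) (\<lambda>z. f (\<xi> * z)) 0 = (deriv ^^ n) f 0"
    using higher_deriv_transform_within_open[OF _ holf] inv \<open>0 < r\<close> by simp
  moreover have "(deriv ^^ n) (\<lambda>z. f (\<xi> * z)) 0 = \<xi> ^ n * (deriv ^^ n) f (\<xi> * 0)"
    by (rule higher_deriv_compose_linear[OF holf, of "ball 0 r"]) (use rot \<open>0 < r\<close> in auto)
  ultimately show ?thesis
    by simp
qed

lemma not_constant_on_if_higher_deriv_nonzero:
  fixes f :: "complex \<Rightarrow> complex"
  assumes "f holomorphic_on S" "open S" "z \<in> S" "n \<noteq> 0" "(deriv ^^ n) f z \<noteq> 0"
  shows "\<not> f constant_on S"
proof
  assume "f constant_on S"
  then obtain c where "\<And>w. w \<in> S \<Longrightarrow> f w = c"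
    unfolding constant_on_def by blast
  then have "(deriv ^^ n) f z = (deriv ^^ n) (\<lambda>w. c) z"
    by (intro higher_deriv_transform_within_open[OF assms(1) holomorphic_on_const assms(2,3)])
  then show False
    using assms(4,5) by simp
qed

lemma deriv_invariant_self_map_root_of_unity:
  fixes g \<psi> :: "complex \<Rightarrow> complex"
  assumes holg: "g holomorphic_on ball 0 1" and nconst: "\<not> g constant_on ball 0 1"
    and hol\<psi>: "\<psi> holomorphic_on ball 0 1" and maps: "\<psi> ` ball 0 1 \<subseteq> ball 0 1"
    and "\<psi> 0 = 0" and inv: "\<And>z. z \<in> ball 0 1 \<Longrightarrow> g (\<psi> z) = g z"
  obtains m where "0 < m" "deriv \<psi> 0 ^ m = 1"
proof -
  have nconst': "\<not> (\<lambda>z. g z - g 0) constant_on ball 0 1"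
    using nconst unfolding constant_on_def by (metis diff_add_cancel)
  obtain h r m where "0 < m" "0 < r" and rsub: "ball 0 r \<subseteq> ball (0::complex) 1"
    and holh: "h holomorphic_on ball 0 r"
    and factor: "\<And>w. w \<in> ball 0 r \<Longrightarrow> g w - g 0 = (w - 0) ^ m * h w"
    and hnz: "\<And>w. w \<in> ball 0 r \<Longrightarrow> h w \<noteq> 0"
    by (rule holomorphic_factor_zero_nonconstant[OF _ open_ball connected_ball _ _ nconst'])
       (use holg in \<open>auto intro!: holomorphic_intros\<close>)
  have contracts: "norm (\<psi> z) \<le> norm z" if "norm z < 1" for z
    using Schwarz_Lemma(1)[OF hol\<psi> \<open>\<psi> 0 = 0\<close> _ that] maps by (auto simp: image_subset_iff)
  have quotient: "(\<psi> z / z) ^ m = h z / h (\<psi> z)" if "z \<in> ball 0 r" "z \<noteq> 0" for z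
  proof -
    have "\<psi> z \<in> ball 0 r"
      using contracts[of z] that rsub by auto
    moreover have "g (\<psi> z) - g 0 = g z - g 0"
      using inv that rsub by auto
    ultimately have "\<psi> z ^ m * h (\<psi> z) = z ^ m * h z"
      using factor that by simp
    then show ?thesis
      using hnz[OF \<open>\<psi> z \<in> ball 0 r\<close>] that(2) by (simp add: field_simps power_divide)
  qed
  have "(\<psi> has_field_derivative deriv \<psi> 0) (at 0)"
    by (rule holomorphic_derivI[OF hol\<psi>]) auto
  then have lim_quotient: "((\<lambda>z. (\<psi> z / z) ^ m) \<longlongrightarrow> deriv \<psi> 0 ^ m) (at 0)"
    using \<open>\<psi> 0 = 0\<close> by (intro tendsto_intros) (simp add: has_field_derivative_iff)
  have lim_h: "((\<lambda>z. h z / h (\<psi> z)) \<longlongrightarrow> h 0 / h (\<psi> 0)) (at 0)"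
  proof -
    have "isCont h 0" "isCont \<psi> 0"
      using holh hol\<psi> \<open>0 < r\<close>
      by (auto intro!: field_differentiable_imp_continuous_at holomorphic_on_imp_differentiable_at)
    then show ?thesis
      using hnz[of 0] \<open>0 < r\<close> \<open>\<psi> 0 = 0\<close>
      by (intro tendsto_intros) (auto simp: isCont_def intro: isCont_tendsto_compose)
  qed
  have "eventually (\<lambda>z. h z / h (\<psi> z) = (\<psi> z / z) ^ m) (at 0)"
    unfolding eventually_at using \<open>0 < r\<close> quotient by (auto simp: dist_norm intro!: exI[of _ r])
  from Lim_transform_eventually[OF lim_h this] lim_quotient
  have "deriv \<psi> 0 ^ m = h 0 / h (\<psi> 0)"
    by (rule LIM_unique[rotated])
  then show ?thesis
    using that \<open>0 < m\<close> hnz[of 0] \<open>0 < r\<close> \<open>\<psi> 0 = 0\<close> by simp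
qed

lemma invariant_self_map_is_rotation:
  fixes g \<psi> :: "complex \<Rightarrow> complex"
  assumes "g holomorphic_on ball 0 1" "\<not> g constant_on ball 0 1"
    and hol\<psi>: "\<psi> holomorphic_on ball 0 1" and maps: "\<psi> ` ball 0 1 \<subseteq> ball 0 1"
    and "\<psi> 0 = 0" and "\<And>z. z \<in> ball 0 1 \<Longrightarrow> g (\<psi> z) = g z"
  shows "\<exists>\<xi>. norm \<xi> = 1 \<and> (\<forall>z\<in>ball 0 1. \<psi> z = \<xi> * z)"
proof -
  obtain m where "0 < m" "deriv \<psi> 0 ^ m = 1"
    using deriv_invariant_self_map_root_of_unity assms by blast
  then have "norm (deriv \<psi> 0) = 1"
    using power_eq_1_iff by blast
  then show ?thesis
    using Schwarz_Lemma(3)[OF hol\<psi> \<open>\<psi> 0 = 0\<close> _ _, of 0] maps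
    by (auto simp: image_subset_iff)
qed

definition herglotz_sum :: "nat \<Rightarrow> (nat \<Rightarrow> real) \<Rightarrow> (nat \<Rightarrow> complex) \<Rightarrow> complex \<Rightarrow> complex" where
  "herglotz_sum N lam \<alpha> z = (\<Sum>j<N. of_real (lam j) * ((1 + \<alpha> j * z) / (1 - \<alpha> j * z)))"

lemma Re_herglotz_kernel_nonneg:
  fixes u :: complex
  assumes "norm u < 1"
  shows "0 \<le> Re ((1 + u) / (1 - u))"
proof -
  have "(Re u)\<^sup>2 + (Im u)\<^sup>2 < 1"
    using assms by (simp add: cmod_def)
  then have "0 \<le> (1 + Re u) * (1 - Re u) + Im u * (- Im u)"
    by (simp add: power2_eq_square algebra_simps)
  then show ?thesis
    by (simp add: Re_divide)
qed

lemma herglotz_sum_radial_lower_bound: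
  assumes atoms: "\<forall>j<N. lam j > 0 \<and> norm (\<alpha> j) = 1" and "k < N" and "0 \<le> t" "t < 1"
  shows "lam k / (1 - t) \<le> Re (herglotz_sum N lam \<alpha> (of_real t * cnj (\<alpha> k)))"
proof -
  define summand where "summand j = lam j * Re ((1 + \<alpha> j * (of_real t * cnj (\<alpha> k))) /
                                         (1 - \<alpha> j * (of_real t * cnj (\<alpha> k))))" for j
  have Re_sum: "Re (herglotz_sum N lam \<alpha> (of_real t * cnj (\<alpha> k))) = (\<Sum>j<N. summand j)"
  proof -
    have Re_scale: "Re (of_real a * w) = a * Re w" for a w
      by simp
    show ?thesis
      unfolding herglotz_sum_def summand_def Re_sum by (simp only: Re_scale)
  qed
  have nonneg: "0 \<le> summand j" if "j < N" for j
    unfolding summand_def using atoms that \<open>k < N\<close> \<open>0 \<le> t\<close> \<open>t < 1\<close>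
    by (intro mult_nonneg_nonneg Re_herglotz_kernel_nonneg) (auto simp: norm_mult)
  have "\<alpha> k * cnj (\<alpha> k) = 1"
    using atoms \<open>k < N\<close> by (metis complex_norm_square of_real_1 power_one)
  then have pole: "\<alpha> k * (of_real t * cnj (\<alpha> k)) = of_real t"
    by (metis mult.left_commute mult.right_neutral)
  have "summand k = lam k * Re (of_real ((1 + t) / (1 - t)))"
    unfolding summand_def pole by simp
  also have "\<dots> = lam k * ((1 + t) / (1 - t))"
    by (simp only: Re_complex_of_real)
  also have "\<dots> \<ge> lam k / (1 - t)"
    using atoms \<open>k < N\<close> \<open>0 \<le> t\<close> \<open>t < 1\<close> by (simp add: divide_right_mono)
  finally have "lam k / (1 - t) \<le> summand k" .
  also have "summand k \<le> (\<Sum>j<N. summand j)"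
    using nonneg \<open>k < N\<close> by (intro member_le_sum) auto
  finally show ?thesis
    using Re_sum by simp
qed

lemma herglotz_sum_radial_at_top:
  assumes "\<forall>j<N. lam j > 0 \<and> norm (\<alpha> j) = 1" and "k < N"
  shows "filterlim (\<lambda>t. Re (herglotz_sum N lam \<alpha> (of_real t * cnj (\<alpha> k)))) at_top (at_left 1)"
proof (rule filterlim_at_top_mono)
  have "filterlim (\<lambda>t::real. 1 / (1 - t)) at_top (at_left 1)"
    by real_asymp
  then show "filterlim (\<lambda>t. lam k * (1 / (1 - t))) at_top (at_left 1)"
    using assms by (intro filterlim_tendsto_pos_mult_at_top[OF tendsto_const]) auto
  have "eventually (\<lambda>t::real. 0 < t \<and> t < 1) (at_left 1)"
    by (auto simp: eventually_at_left_field intro!: exI[of _ 0])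
  then show "eventually (\<lambda>t. lam k * (1 / (1 - t)) \<le>
      Re (herglotz_sum N lam \<alpha> (of_real t * cnj (\<alpha> k)))) (at_left 1)"
    by eventually_elim (use herglotz_sum_radial_lower_bound[OF assms] in auto)
qed

lemma herglotz_sum_radial_tendsto:
  assumes "\<forall>j<N. \<alpha> j * \<beta> \<noteq> 1"
  shows "((\<lambda>t. Re (herglotz_sum N lam \<alpha> (of_real t * \<beta>))) \<longlongrightarrow> Re (herglotz_sum N lam \<alpha> \<beta>))
           (at_left 1)"
proof -
  have "((\<lambda>t. herglotz_sum N lam \<alpha> (of_real t * \<beta>)) \<longlongrightarrow> herglotz_sum N lam \<alpha> (of_real 1 * \<beta>))
          (at_left 1)"
    unfolding herglotz_sum_def using assms by (intro tendsto_intros) auto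
  then show ?thesis
    by (intro tendsto_intros) simp
qed

lemma herglotz_sum_rotation_invariant_atoms:
  assumes atoms: "\<forall>j<N. lam j > 0 \<and> norm (\<alpha> j) = 1" and "norm \<xi> = 1"
    and inv: "\<And>z. z \<in> ball 0 1 \<Longrightarrow>
                Re (herglotz_sum N lam \<alpha> (\<xi> * z)) = Re (herglotz_sum N lam \<alpha> z)"
    and "k < N"
  shows "cnj \<xi> * \<alpha> k \<in> \<alpha> ` {..<N}"
proof (rule ccontr)
  \<comment> \<open>Re of the sum tends to infinity along the radius to cnj (\<alpha> k), hence also along its
     rotated image, which ends at \<xi> * cnj (\<alpha> k); so that endpoint must be a pole.\<close>
  assume not_atom: "cnj \<xi> * \<alpha> k \<notin> \<alpha> ` {..<N}"
  have unit: "cnj \<xi> * \<xi> = 1" "cnj (\<alpha> k) * \<alpha> k = 1"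
    using \<open>norm \<xi> = 1\<close> atoms \<open>k < N\<close> by (simp_all add: complex_norm_square[symmetric] mult.commute)
  have "\<alpha> j * (\<xi> * cnj (\<alpha> k)) \<noteq> 1" if "j < N" for j
  proof
    assume "\<alpha> j * (\<xi> * cnj (\<alpha> k)) = 1"
    then have "\<alpha> j = cnj \<xi> * \<alpha> k"
      using unit by (metis mult.assoc mult.commute mult.left_neutral)
    with not_atom that show False
      by (metis image_eqI lessThan_iff)
  qed
  then have lim: "((\<lambda>t. Re (herglotz_sum N lam \<alpha> (of_real t * (\<xi> * cnj (\<alpha> k))))) \<longlongrightarrow>
                    Re (herglotz_sum N lam \<alpha> (\<xi> * cnj (\<alpha> k)))) (at_left 1)"
    by (intro herglotz_sum_radial_tendsto) auto
  have "eventually (\<lambda>t::real. 0 < t \<and> t < 1) (at_left 1)"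
    by (auto simp: eventually_at_left_field intro!: exI[of _ 0])
  then have "eventually (\<lambda>t. Re (herglotz_sum N lam \<alpha> (of_real t * (\<xi> * cnj (\<alpha> k)))) =
                            Re (herglotz_sum N lam \<alpha> (of_real t * cnj (\<alpha> k)))) (at_left 1)"
  proof eventually_elim
    case (elim t)
    then have "of_real t * cnj (\<alpha> k) \<in> ball 0 1"
      using atoms \<open>k < N\<close> by (simp add: norm_mult)
    from inv[OF this] show ?case
      by (simp add: ac_simps)
  qed
  from Lim_transform_eventually[OF lim this] show False
    using not_tendsto_and_filterlim_at_infinity[OF trivial_limit_at_left_real]
          filterlim_at_top_imp_at_infinity[OF herglotz_sum_radial_at_top[OF atoms \<open>k < N\<close>]]
    by blast
qed

lemma has_atomsE:
  assumes "has_atoms f N"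
  obtains lam \<alpha> where "N \<noteq> 0" "\<forall>j<N. lam j > 0 \<and> norm (\<alpha> j) = 1" "inj_on \<alpha> {..<N}"
    "\<And>z. z \<in> ball 0 1 \<Longrightarrow> norm (f z) = exp (- Re (herglotz_sum N lam \<alpha> z))"
proof -
  obtain \<gamma> lam \<alpha> where "N \<noteq> 0" "norm \<gamma> = 1" "\<forall>j<N. lam j > 0 \<and> norm (\<alpha> j) = 1"
    "inj_on \<alpha> {..<N}" "\<And>z. z \<in> ball 0 1 \<Longrightarrow> f z = \<gamma> * exp (- herglotz_sum N lam \<alpha> z)"
    using assms unfolding has_atoms_def herglotz_sum_def by auto
  then show ?thesis
    using that by (simp add: norm_mult)
qed

lemma has_atoms_norm_0_less_1:
  assumes "has_atoms f N"
  shows "norm (f 0) < 1"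
proof -
  obtain lam \<alpha> where "N \<noteq> 0" and atoms: "\<forall>j<N. lam j > 0 \<and> norm (\<alpha> j) = 1"
    and norm_f: "\<And>z. z \<in> ball 0 1 \<Longrightarrow> norm (f z) = exp (- Re (herglotz_sum N lam \<alpha> z))"
    using assms by (rule has_atomsE) blast
  have "Re (herglotz_sum N lam \<alpha> 0) = (\<Sum>j<N. lam j)"
    by (simp add: herglotz_sum_def Re_sum)
  also have "\<dots> > 0"
    using atoms \<open>N \<noteq> 0\<close> by (intro sum_pos) auto
  finally show ?thesis
    using norm_f[of 0] by simp
qed

lemma has_atoms_rotation_invariant_power_eq_1:
  assumes "has_atoms f N" and "norm \<xi> = 1" and inv: "\<And>z. z \<in> ball 0 1 \<Longrightarrow> f (\<xi> * z) = f z"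
  shows "\<xi> ^ N = 1"
proof -
  obtain lam \<alpha> where atoms: "\<forall>j<N. lam j > 0 \<and> norm (\<alpha> j) = 1" and "inj_on \<alpha> {..<N}"
    and norm_f: "\<And>z. z \<in> ball 0 1 \<Longrightarrow> norm (f z) = exp (- Re (herglotz_sum N lam \<alpha> z))"
    using assms(1) by (rule has_atomsE) blast
  have "Re (herglotz_sum N lam \<alpha> (\<xi> * z)) = Re (herglotz_sum N lam \<alpha> z)" if "z \<in> ball 0 1" for z
  proof -
    have "\<xi> * z \<in> ball 0 1"
      using that \<open>norm \<xi> = 1\<close> by (simp add: norm_mult)
    then show ?thesis
      using norm_f[OF that] norm_f[of "\<xi> * z"] inv[OF that] by simp
  qed
  then have "(\<lambda>a. cnj \<xi> * a) ` \<alpha> ` {..<N} \<subseteq> \<alpha> ` {..<N}"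
    using herglotz_sum_rotation_invariant_atoms[OF atoms \<open>norm \<xi> = 1\<close>] by blast
  then have "cnj \<xi> ^ card (\<alpha> ` {..<N}) = 1"
    using atoms \<open>norm \<xi> = 1\<close> by (intro power_card_eq_1_if_scaling_invariant) auto
  then have "cnj (\<xi> ^ N) = 1"
    using \<open>inj_on \<alpha> {..<N}\<close> by (simp add: card_image)
  then show ?thesis
    by (metis complex_cnj_cnj complex_cnj_one)
qed

lemma higher_deriv_half_one_plus_power:
  assumes "n \<noteq> 0"
  shows "(deriv ^^ n) (\<lambda>z::complex. (1 + z ^ n) / 2) 0 = fact n / 2"
proof -
  have "(deriv ^^ n) (\<lambda>z::complex. (1 / 2) * (1 + (z - 0) ^ n)) 0
          = (1 / 2) * (deriv ^^ n) (\<lambda>z. 1 + (z - 0) ^ n) 0"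
    by (rule higher_deriv_cmult[where A = UNIV]) (auto intro!: holomorphic_intros)
  also have "(deriv ^^ n) (\<lambda>z::complex. 1 + (z - 0) ^ n) 0
               = (deriv ^^ n) (\<lambda>z. 1) 0 + (deriv ^^ n) (\<lambda>z. (z - 0) ^ n) 0"
    by (rule higher_deriv_add[where S = UNIV]) (auto intro!: holomorphic_intros)
  also have "\<dots> = fact n"
    using assms higher_deriv_power[of n 0 n 0] by (simp add: pochhammer_fact)
  finally show ?thesis
    by simp
qed

lemma half_one_plus_power_in_B0:
  assumes "n \<noteq> 0"
  shows "(\<lambda>z::complex. (1 + z ^ n) / 2) \<in> B0"
  unfolding B0_def
proof (intro CollectI conjI ballI)
  show "(\<lambda>z::complex. (1 + z ^ n) / 2) holomorphic_on ball 0 1"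
    by (auto intro!: holomorphic_intros)
next
  fix z :: complex
  assume "z \<in> ball 0 1"
  then have "norm (z ^ n) < 1"
    using assms by (simp add: norm_power power_less_one_iff)
  moreover from this have "1 + z ^ n \<noteq> 0"
    by (metis add_eq_0_iff norm_minus_cancel norm_one order_less_irrefl)
  ultimately show "0 < norm ((1 + z ^ n) / 2)" and "norm ((1 + z ^ n) / 2) \<le> 1"
    using norm_triangle_ineq[of 1 "z ^ n"] by (simp_all add: norm_divide)
qed

lemma extremal_0_norm_ge_1:
  assumes "extremal 0 f"
  shows "1 \<le> norm (f 0)"
proof -
  have "(\<lambda>z. 1) \<in> B0"
    unfolding B0_def by auto
  then have "1 \<le> Re (f 0)"
    using assms by (auto simp: extremal_def M_def taylor_coeff_def)
  then show ?thesis
    using complex_Re_le_cmod order_trans by blast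
qed

lemma extremal_higher_deriv_nonzero:
  assumes "extremal n f" and "n \<noteq> 0"
  shows "(deriv ^^ n) f 0 \<noteq> 0"
proof
  assume "(deriv ^^ n) f 0 = 0"
  then have "M n f = 0"
    by (simp add: M_def taylor_coeff_def)
  moreover have "M n (\<lambda>z::complex. (1 + z ^ n) / 2) = 1 / 2"
    by (simp add: M_def taylor_coeff_def higher_deriv_half_one_plus_power[OF \<open>n \<noteq> 0\<close>])
  moreover have "M n (\<lambda>z::complex. (1 + z ^ n) / 2) \<le> M n f"
    using assms(1) half_one_plus_power_in_B0[OF \<open>n \<noteq> 0\<close>] unfolding extremal_def by blast
  ultimately show False
    by simp
qed

theorem corollary3:
  fixes n N :: nat and f \<psi> :: "complex \<Rightarrow> complex"
  assumes "extremal n f"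
    and "has_atoms f N"
    and "\<psi> holomorphic_on ball 0 1"
    and "\<psi> ` ball 0 1 \<subseteq> ball 0 1"
    and "\<exists>z\<in>ball 0 1. \<psi> z \<noteq> z"
    and "\<psi> 0 = 0"
    and "\<forall>z\<in>ball 0 1. f (\<psi> z) = f z"
  shows "(\<exists>\<xi>. norm \<xi> = 1 \<and> (\<forall>z\<in>ball 0 1. \<psi> z = \<xi> * z)) \<and> gcd N n > 1"
proof -
  have holf: "f holomorphic_on ball 0 1"
    using assms(1) by (simp add: extremal_def B0_def)
  have "n \<noteq> 0"
  proof
    assume "n = 0"
    then have "1 \<le> norm (f 0)"
      using assms(1) extremal_0_norm_ge_1 by simp
    with has_atoms_norm_0_less_1[OF assms(2)] show False
      by simp
  qed
  have coeff: "(deriv ^^ n) f 0 \<noteq> 0"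
    using assms(1) \<open>n \<noteq> 0\<close> by (rule extremal_higher_deriv_nonzero)
  have "\<not> f constant_on ball 0 1"
    by (rule not_constant_on_if_higher_deriv_nonzero[OF holf open_ball _ \<open>n \<noteq> 0\<close> coeff]) simp
  with holf assms(3,4,6,7) obtain \<xi> where "norm \<xi> = 1" and rotation: "\<forall>z\<in>ball 0 1. \<psi> z = \<xi> * z"
    by (metis invariant_self_map_is_rotation)
  have inv: "\<And>z. z \<in> ball 0 1 \<Longrightarrow> f (\<xi> * z) = f z"
    using rotation assms(7) by simp
  have "\<xi> \<noteq> 1"
  proof
    assume "\<xi> = 1"
    with rotation assms(5) show False
      by simp
  qed
  moreover have "\<xi> ^ n = 1"
    using higher_deriv_0_rotation_invariant[OF holf zero_less_one \<open>norm \<xi> = 1\<close> inv, of n] coeff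
    by simp
  moreover have "\<xi> ^ N = 1"
    using has_atoms_rotation_invariant_power_eq_1[OF assms(2) \<open>norm \<xi> = 1\<close> inv] .
  moreover have "N \<noteq> 0"
    using assms(2) by (simp add: has_atoms_def)
  ultimately have "gcd N n > 1"
    using power_gcd_eq_1[of \<xi> N n] by (metis gcd_eq_0_iff less_one nat_neq_iff power_one_right)
  then show ?thesis
    using \<open>norm \<xi> = 1\<close> rotation by blast
qed

end
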